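(* Let $f:[\frac13,2]\to[\frac13,2]$ be defined by $f(x)=2x$ if $x\in[\frac13,1)$ and $f(x)=\frac{x}{3}$ if $x\in[1,2]$. Then for every $x\in[\frac13,2]$ the orbit $\{f^n(x): n\ge 0\}$ is dense in $[\frac13,2]$. *)

theory Defs
  imports "HOL-Analysis.Analysis"
begin

text \<open>The map f on [1/3,2]: f x = 2x on [1/3,1), f x = x/3 on [1,2].
  Outside [1/3,2] the value is irrelevant (the interval is invariant); we use the identity there.\<close>
definition fmap :: "real \<Rightarrow> real" where
  "fmap x = (if 1/3 \<le> x \<and> x < 1 then 2 * x
             else if 1 \<le> x \<and> x \<le> 2 then x / 3 else x)"

end

theory Submission
  imports Defs
begin

text \<open>In the coordinate \<open>t = log\<^sub>6 (3x)\<close>, which maps \<open>[1/3, 2]\<close> onto \<open>[0, 1]\<close>,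
  doubling adds \<open>log\<^sub>6 2\<close> and division by 3 subtracts \<open>log\<^sub>6 3 = 1 - log\<^sub>6 2\<close>, so \<open>f\<close>
  becomes the rotation by \<open>log\<^sub>6 2\<close> modulo 1. This angle is irrational because
  \<open>2\<^sup>q \<noteq> 6\<^sup>p\<close>, so by Kronecker's theorem every orbit of the rotation is dense in \<open>[0, 1]\<close>,
  and the continuous map \<open>t \<mapsto> 6\<^sup>t / 3\<close> carries this density back to \<open>[1/3, 2]\<close>.\<close>

lemma dense_in_unit_interval_mod_one:
  fixes \<theta> c :: real and v :: "nat \<Rightarrow> real"
  assumes "\<theta> \<notin> \<rat>"
    and v_range: "\<And>n. v n \<in> {0..1}"
    and v_mod_one: "\<And>n. v n - (c + real n * \<theta>) \<in> \<int>"
  shows "{0..1} \<subseteq> closure (range v)"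
proof -
  have "u \<in> closure (range v)" if u: "u \<in> {0<..<1}" for u
    unfolding closure_approachable dist_real_def
  proof (intro allI impI)
    fix e :: real assume "e > 0"
    define \<delta> where "\<delta> = min e (min u (1 - u))"
    have "\<delta> > 0" using \<open>e > 0\<close> u by (simp add: \<delta>_def)
    then obtain h k :: int where "k > 0" and close: "\<bar>of_int k * \<theta> - of_int h - (u - c)\<bar> < \<delta>"
      using sequence_of_fractional_parts_is_dense[OF \<open>\<theta> \<notin> \<rat>\<close>] by metis
    define n where "n = nat k"
    define d where "d = c + real n * \<theta> - of_int h - u"
    have "(v n - u) - d = (v n - (c + real n * \<theta>)) + of_int h"
      by (simp add: d_def)
    then have "(v n - u) - d \<in> \<int>"
      using v_mod_one[of n] by (metis Ints_add Ints_of_int)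
    moreover have "\<bar>v n - u\<bar> \<le> 1 - \<delta>"
      using v_range[of n] by (auto simp: \<delta>_def)
    moreover have "\<bar>d\<bar> < \<delta>"
      using close \<open>k > 0\<close> by (simp add: d_def n_def algebra_simps)
    ultimately have "v n - u = d"
      using Ints_nonzero_abs_less1[of "v n - u - d"] by simp
    then show "\<exists>y\<in>range v. \<bar>y - u\<bar> < e"
      using \<open>\<bar>d\<bar> < \<delta>\<close> by (auto simp: \<delta>_def)
  qed
  then have "closure {0<..<1} \<subseteq> closure (range v)"
    by (intro closure_minimal) auto
  then show ?thesis by simp
qed

lemma three_not_dvd_power_two: "\<not> (3::nat) dvd 2 ^ n"
proof (induction n)
  case (Suc n)
  have "coprime (3::nat) 2" by simp
  with Suc show ?case by (simp add: coprime_dvd_mult_right_iff)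
qed simp

lemma log6_2_irrational: "log 6 2 \<notin> \<rat>"
proof
  assume "log 6 2 \<in> \<rat>"
  then obtain p q :: int where "q > 0" and pq: "log 6 2 = of_int p / of_int q"
    by (rule Rats_cases')
  have "0 < log 6 (2::real)" by simp
  then have "p > 0" using \<open>q > 0\<close> pq by (simp add: zero_less_divide_iff)
  have "real_of_int q * ln 2 = real_of_int p * ln 6"
    using pq \<open>q > 0\<close> by (simp add: log_def field_simps)
  then have "ln (2 ^ nat q) = ln ((6::real) ^ nat p)"
    using \<open>q > 0\<close> \<open>p > 0\<close> by (simp add: ln_realpow)
  then have "real (2 ^ nat q) = real (6 ^ nat p)"
    by simp
  then have "(2::nat) ^ nat q = 6 ^ nat p"
    by (simp only: of_nat_eq_iff)
  moreover have "(3::nat) dvd 6 ^ nat p"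
    using \<open>p > 0\<close> dvd_trans[of "3::nat" 6] dvd_power[of "nat p" "6::nat"] by simp
  ultimately show False
    using three_not_dvd_power_two by metis
qed

lemma fmap_in_interval: "y \<in> {1/3..2} \<Longrightarrow> fmap y \<in> {1/3..2}"
  by (auto simp: fmap_def)

lemma funpow_fmap_in_interval: "x \<in> {1/3..2} \<Longrightarrow> (fmap ^^ n) x \<in> {1/3..2}"
  by (induction n) (auto simp del: atLeastAtMost_iff intro: fmap_in_interval)

lemma log6_in_unit_interval: "y \<in> {1/3..2} \<Longrightarrow> log 6 (3 * y) \<in> {0..1}"
  by auto

lemma log6_fmap:
  assumes "y \<in> {1/3..2}"
  shows "log 6 (3 * fmap y) = log 6 (3 * y) + log 6 2 - (if 1 \<le> y then 1 else 0)"
proof (cases "1 \<le> y")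
  case True
  have "log 6 2 + log 6 3 = 1"
    using log_mult[of 6 2 3] by simp
  moreover have "log 6 (3 * y) = log 6 3 + log 6 y"
    using assms by (simp add: log_mult)
  moreover have "3 * fmap y = y"
    using True assms by (simp add: fmap_def)
  ultimately show ?thesis
    using True by simp
next
  case False
  then have "3 * fmap y = 2 * (3 * y)"
    using assms by (simp add: fmap_def)
  then show ?thesis
    using False assms log_mult[of 6 2 3] by (simp add: log_mult)
qed

lemma log6_funpow_fmap_mod_one:
  assumes "x \<in> {1/3..2}"
  shows "log 6 (3 * (fmap ^^ n) x) - (log 6 (3 * x) + real n * log 6 2) \<in> \<int>"
proof (induction n)
  case (Suc n)
  let ?y = "(fmap ^^ n) x"
  have "log 6 (3 * (fmap ^^ Suc n) x) - (log 6 (3 * x) + real (Suc n) * log 6 2)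
      = (log 6 (3 * ?y) - (log 6 (3 * x) + real n * log 6 2)) - (if 1 \<le> ?y then 1 else 0)"
    using log6_fmap[OF funpow_fmap_in_interval[OF assms]] by (simp add: algebra_simps)
  also have "\<dots> \<in> \<int>"
    by (rule Ints_diff[OF Suc.IH]) simp
  finally show ?case .
qed simp

theorem mainTheorem2:
  fixes x :: real
  assumes "x \<in> {1/3..2}"
  shows "{1/3..2} \<subseteq> closure {(fmap ^^ n) x | n. n \<ge> 0}"
proof -
  define v where "v n = log 6 (3 * (fmap ^^ n) x)" for n
  define \<psi> :: "real \<Rightarrow> real" where "\<psi> t = 6 powr t / 3" for t
  have \<psi>_log6: "\<psi> (log 6 (3 * y)) = y" if "y > 0" for y
    using that by (simp add: \<psi>_def)
  have dense: "{0..1} \<subseteq> closure (range v)"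
    unfolding v_def
    by (intro dense_in_unit_interval_mod_one[OF log6_2_irrational _ log6_funpow_fmap_mod_one]
        log6_in_unit_interval funpow_fmap_in_interval assms)
  have "continuous_on UNIV \<psi>"
    unfolding \<psi>_def by (intro continuous_intros) auto
  then have "\<psi> ` closure (range v) \<subseteq> closure (\<psi> ` range v)"
    by (intro image_closure_subset closure_subset) (auto intro: continuous_on_subset)
  with dense have "\<psi> ` {0..1} \<subseteq> closure (\<psi> ` range v)"
    by blast
  moreover have "{1/3..2} \<subseteq> \<psi> ` {0..1}"
  proof
    fix y :: real assume "y \<in> {1/3..2}"
    then show "y \<in> \<psi> ` {0..1}"
      using \<psi>_log6[of y] by (intro rev_image_eqI[of "log 6 (3 * y)"] log6_in_unit_interval) auto
  qed
  moreover have "\<psi> (v n) = (fmap ^^ n) x" for n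
    using \<psi>_log6 funpow_fmap_in_interval[OF assms, of n] by (simp add: v_def)
  then have "\<psi> ` range v = {(fmap ^^ n) x | n. n \<ge> 0}"
    by (auto simp: image_image)
  ultimately show ?thesis by simp
qed

end
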